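(* There exists an absolute constant $m_0$ such that the following holds for every integer $m\ge m_0$. Let $q=2^m$ and $a,b\in\mathbb{F}_{q^2}$, and let $P_1(x)=ax^{q+1}+bx^{2(q+1)}\in\mathbb{F}_{q^2}[x]$. Then $P_1$ is a planar function on $\mathbb{F}_{q^2}$ if and only if $$(a,b)=\Big(\frac{s^q}{1+s^{1+q}},\,0\Big)$$ for some $s\in\mathbb{F}_{q^2}$ with $1+s^{1+q}\neq 0$.
   Context: A function $f:\mathbb{F}_{2^n}\to\mathbb{F}_{2^n}$ is called planar if for every $a\in\mathbb{F}_{2^n}^{*}$ the map $x\mapsto f(x+a)+f(x)+ax$ is a permutation of $\mathbb{F}_{2^n}$. *)

theory Defs
  imports "HOL-Algebra.Algebra"
begin

text \<open>A function f on the field R (intended to be of characteristic 2) is planar if for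
every nonzero a the map x |-> f(x+a) + f(x) + a x is a permutation of the field.\<close>
definition planar :: "('a, 'b) ring_scheme \<Rightarrow> ('a \<Rightarrow> 'a) \<Rightarrow> bool" where
  "planar R f \<longleftrightarrow>
     (\<forall>a \<in> carrier R - {\<zero>\<^bsub>R\<^esub>}.
        bij_betw (\<lambda>x. f (x \<oplus>\<^bsub>R\<^esub> a) \<oplus>\<^bsub>R\<^esub> f x \<oplus>\<^bsub>R\<^esub> (a \<otimes>\<^bsub>R\<^esub> x))
                 (carrier R) (carrier R))"

end

theory Submission
  imports Defs
begin

text \<open>Write q = 2^m, and N x = x^(q+1) and Tr x = x + x^q for the norm and the trace from
  GF(q^2) to GF(q). Then P1 = a N + b N^2, and in characteristic 2 its derivative
  x \<mapsto> P1 (x + c) + P1 x + c x in direction c is P1 c plus the additive map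
  x \<mapsto> a t + b t^2 + c x with t = Tr (c^q x) in GF(q). This map has a nonzero kernel exactly
  when Tr (v (a + b k)) = 1 for v = c^(q-1) and some nonzero k in GF(q); by Hilbert 90 these v are
  the q + 1 elements of norm one. For v of norm one, Tr (v a) = 1 says that v is a root of
  a X^2 + X + a^q, and two distinct roots of this quadratic add up to 1/a.

  If b is nonzero, at most one v of norm one has Tr (v b) = 0 and at most two have Tr (v a) = 1.
  For q > 2 some v of norm one is left over, and k = (1 + Tr (v a)) / Tr (v b) shows that P1 is
  not planar.

  If b = 0, P1 is planar iff no root of a X^2 + X + a^q has norm one. Since N a lies in GF(q), the
  quadratic has a root s in GF(q^2) by Artin-Schreier, and 1/s^q is a root as well. Unless
  N s = 1 the two roots differ, so s + 1/s^q = 1/a, that is a = s^q / (1 + N s).\<close>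

lemma card_eq_double_card_image:
  assumes "finite S" and "\<And>x. x \<in> S \<Longrightarrow> card {y \<in> S. h y = h x} = 2"
  shows "card S = 2 * card (h ` S)"
proof -
  have "card S = card (\<Union>z\<in>h ` S. {y \<in> S. h y = z})"
    by (rule arg_cong[where f = card]) auto
  also have "\<dots> = (\<Sum>z\<in>h ` S. card {y \<in> S. h y = z})"
    by (rule card_UN_disjoint) (use assms(1) in auto)
  also have "\<dots> = (\<Sum>z\<in>h ` S. 2)"
    by (rule sum.cong) (use assms(2) in auto)
  finally show ?thesis by simp
qed

lemma (in ring) bij_betw_add_additive_iff:
  assumes "finite (carrier R)" and d: "d \<in> carrier R"
    and L: "\<And>x. x \<in> carrier R \<Longrightarrow> L x \<in> carrier R"
    and L_add: "\<And>x y. x \<in> carrier R \<Longrightarrow> y \<in> carrier R \<Longrightarrow> L (x \<oplus> y) = L x \<oplus> L y"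
  shows "bij_betw (\<lambda>x. d \<oplus> L x) (carrier R) (carrier R) \<longleftrightarrow> (\<forall>x\<in>carrier R. L x = \<zero> \<longrightarrow> x = \<zero>)"
proof -
  have L_zero: "L \<zero> = \<zero>"
    using L_add[of \<zero> \<zero>] L[of \<zero>] by simp
  have "inj_on (\<lambda>x. d \<oplus> L x) (carrier R) \<longleftrightarrow> (\<forall>x\<in>carrier R. L x = \<zero> \<longrightarrow> x = \<zero>)"
  proof
    assume inj: "inj_on (\<lambda>x. d \<oplus> L x) (carrier R)"
    show "\<forall>x\<in>carrier R. L x = \<zero> \<longrightarrow> x = \<zero>"
    proof (intro ballI impI)
      fix x assume "x \<in> carrier R" "L x = \<zero>"
      then show "x = \<zero>" using inj_onD[OF inj, of x \<zero>] L_zero by simp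
    qed
  next
    assume ker: "\<forall>x\<in>carrier R. L x = \<zero> \<longrightarrow> x = \<zero>"
    show "inj_on (\<lambda>x. d \<oplus> L x) (carrier R)"
    proof (rule inj_onI)
      fix x y assume x: "x \<in> carrier R" and y: "y \<in> carrier R" and "d \<oplus> L x = d \<oplus> L y"
      then have "L x = L y" using d L by simp
      moreover have "x \<ominus> y \<oplus> y = x" using x y by algebra
      then have "L (x \<ominus> y) \<oplus> L y = L x"
        using L_add[of "x \<ominus> y" y] x y by simp
      ultimately have "L (x \<ominus> y) = \<zero>" using x y L by simp
      then show "x = y" using ker x y by (metis minus_closed r_right_minus_eq)
    qed
  qed
  moreover have "(\<lambda>x. d \<oplus> L x) ` carrier R \<subseteq> carrier R" using d L by auto
  ultimately show ?thesis
    unfolding bij_betw_def using endo_inj_surj[OF assms(1)] by blast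
qed

lemma (in field) nonzero_inverse:
  assumes "x \<in> carrier R" "x \<noteq> \<zero>"
  shows "inv x \<in> carrier R" "inv x \<otimes> x = \<one>" "x \<otimes> inv x = \<one>"
  using assms field_Units by auto

subsection \<open>Characteristic two\<close>

lemma (in cring) add_pow_power_one: "add_pow R (k ^ n) \<one> = add_pow R k \<one> [^] n" for k :: nat
proof (induction n)
  case (Suc n)
  have "add_pow R (k ^ Suc n) \<one> = add_pow R (k ^ n * k) \<one>" by (simp add: mult.commute)
  also have "\<dots> = add_pow R k (\<one> \<otimes> add_pow R (k ^ n) \<one>)"
    using add.nat_pow_pow[of \<one> k "k ^ n"] by simp
  also have "\<dots> = add_pow R k \<one> \<otimes> add_pow R (k ^ n) \<one>"
    using add_pow_ldistr[of \<one> "add_pow R (k ^ n) \<one>" k] by simp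
  finally show ?case using Suc by (simp add: m_comm)
qed simp

lemma (in domain) pow_eq_zero_imp: "x \<in> carrier R \<Longrightarrow> x [^] (n::nat) = \<zero> \<Longrightarrow> x = \<zero>"
  by (induction n) (auto simp: integral_iff m_comm)

lemma (in domain) one_add_one_eq_zero_if_card_power_of_two:
  assumes "finite (carrier R)" and "card (carrier R) = 2 ^ n"
  shows "\<one> \<oplus> \<one> = \<zero>"
proof -
  have "add_pow R ((2::nat) ^ n) \<one> = \<zero>"
    using add.pow_order_eq_1[of \<one>] assms by (simp add: order_def)
  then have "add_pow R (2::nat) \<one> = \<zero>"
    using add_pow_power_one pow_eq_zero_imp by simp
  then show ?thesis by (simp add: numeral_2_eq_2)
qed

locale char2_domain = domain +
  assumes one_add_one: "\<one> \<oplus> \<one> = \<zero>"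
begin

lemma add_self [simp]: "x \<in> carrier R \<Longrightarrow> x \<oplus> x = \<zero>"
proof -
  assume x: "x \<in> carrier R"
  have "x \<oplus> x = (\<one> \<oplus> \<one>) \<otimes> x" using x by algebra
  then show ?thesis using one_add_one x by simp
qed

lemma add_eq_zero_iff: "x \<in> carrier R \<Longrightarrow> y \<in> carrier R \<Longrightarrow> x \<oplus> y = \<zero> \<longleftrightarrow> x = y"
  by (metis add_self minus_equality)

lemma add_eq_iff_eq_add:
  "x \<in> carrier R \<Longrightarrow> y \<in> carrier R \<Longrightarrow> z \<in> carrier R \<Longrightarrow> x \<oplus> y = z \<longleftrightarrow> x = z \<oplus> y"
  by (metis a_assoc add_self r_zero)

lemma square_add:
  "x \<in> carrier R \<Longrightarrow> y \<in> carrier R \<Longrightarrow> (x \<oplus> y) [^] (2::nat) = x [^] (2::nat) \<oplus> y [^] (2::nat)"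
proof -
  assume x: "x \<in> carrier R" and y: "y \<in> carrier R"
  have "(x \<oplus> y) \<otimes> (x \<oplus> y) = x \<otimes> x \<oplus> y \<otimes> y \<oplus> (x \<otimes> y \<oplus> x \<otimes> y)"
    using x y by algebra
  then show ?thesis using x y by (simp add: numeral_2_eq_2)
qed

lemma pow_two_power_add:
  "x \<in> carrier R \<Longrightarrow> y \<in> carrier R
    \<Longrightarrow> (x \<oplus> y) [^] ((2::nat) ^ k) = x [^] ((2::nat) ^ k) \<oplus> y [^] ((2::nat) ^ k)"
proof (induction k)
  case (Suc k)
  have sq: "z [^] ((2::nat) ^ Suc k) = (z [^] ((2::nat) ^ k)) [^] (2::nat)" if "z \<in> carrier R" for z
    using that by (simp add: nat_pow_pow mult.commute)
  show ?case using Suc by (simp only: sq a_closed nat_pow_closed square_add)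
qed simp

lemma quadratic_roots_sum:
  assumes a: "a \<in> carrier R" and x: "x \<in> carrier R" and y: "y \<in> carrier R"
    and rx: "a \<otimes> x \<otimes> x \<oplus> x = e" and ry: "a \<otimes> y \<otimes> y \<oplus> y = e" and "x \<noteq> y"
  shows "a \<otimes> (x \<oplus> y) = \<one>"
proof -
  have e: "e \<in> carrier R" using rx a x by auto
  have "(x \<oplus> y) \<otimes> (a \<otimes> (x \<oplus> y) \<oplus> \<one>)
      = (a \<otimes> x \<otimes> x \<oplus> x) \<oplus> (a \<otimes> y \<otimes> y \<oplus> y) \<oplus> (a \<otimes> x \<otimes> y \<oplus> a \<otimes> x \<otimes> y)"
    using a x y by algebra
  also have "\<dots> = \<zero>" using rx ry e a x y by simp
  finally have "a \<otimes> (x \<oplus> y) \<oplus> \<one> = \<zero>"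
    using integral \<open>x \<noteq> y\<close> add_eq_zero_iff a x y by blast
  then show ?thesis using add_eq_zero_iff a x y by simp
qed

end

subsection \<open>The field with q^2 elements\<close>

locale gf_q2 = field R for R (structure) +
  fixes m :: nat
  assumes finite_carrier: "finite (carrier R)"
    and card_carrier: "card (carrier R) = 2 ^ (2 * m)"
begin

abbreviation q :: nat where "q \<equiv> 2 ^ m"

sublocale char2_domain
  by unfold_locales (rule one_add_one_eq_zero_if_card_power_of_two[OF finite_carrier card_carrier])

lemma card_carrier_eq: "card (carrier R) = q * q"
  using card_carrier by (simp add: power_add[symmetric] mult_2)

lemma q_ge_2: "2 \<le> q"
proof -
  have "card {\<zero>, \<one>} \<le> card (carrier R)"
    by (rule card_mono) (use finite_carrier in auto)
  then have "m \<noteq> 0" using card_carrier_eq by (intro notI) simp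
  then show ?thesis using power_increasing[of 1 m "2::nat"] by simp
qed

lemma pow_q_add: "x \<in> carrier R \<Longrightarrow> y \<in> carrier R \<Longrightarrow> (x \<oplus> y) [^] q = x [^] q \<oplus> y [^] q"
  by (rule pow_two_power_add)

interpretation units: group "Multiplicative_Group.mult_of R"
  rewrites "([^]\<^bsub>Multiplicative_Group.mult_of R\<^esub>) = (([^]) :: _ \<Rightarrow> nat \<Rightarrow> _)"
    and "\<one>\<^bsub>Multiplicative_Group.mult_of R\<^esub> = \<one>"
  by (rule field_mult_group) (simp_all add: fun_eq_iff nat_pow_def)

lemma order_mult_of_eq: "order (Multiplicative_Group.mult_of R) = q * q - 1"
  using order_mult_of[OF finite_carrier] card_carrier_eq by (simp add: order_def)

lemma pow_card_minus_one: "x \<in> carrier R \<Longrightarrow> x \<noteq> \<zero> \<Longrightarrow> x [^] (q * q - 1) = \<one>"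
  using units.pow_order_eq_1[of x] finite_carrier order_mult_of_eq by simp

lemma pow_card: "x \<in> carrier R \<Longrightarrow> x [^] (q * q) = x"
proof (cases "x = \<zero>")
  case True then show ?thesis using q_ge_2 by (simp add: nat_pow_zero)
next
  case False
  assume x: "x \<in> carrier R"
  have "q * q = Suc (q * q - 1)" using q_ge_2 by simp
  then have "x [^] (q * q) = x [^] (q * q - 1) \<otimes> x" using x by (metis nat_pow_Suc)
  then show ?thesis using pow_card_minus_one[OF x False] x by simp
qed

lemma pow_q_pow_q [simp]: "x \<in> carrier R \<Longrightarrow> (x [^] q) [^] q = x"
  using pow_card by (simp add: nat_pow_pow)

lemma inv_pow: "x \<in> carrier R \<Longrightarrow> x \<noteq> \<zero> \<Longrightarrow> inv x [^] (n::nat) = inv (x [^] n)"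
proof -
  assume x: "x \<in> carrier R" "x \<noteq> \<zero>"
  have xi: "inv x \<in> carrier R" "x \<otimes> inv x = \<one>" using x by (simp_all add: nonzero_inverse)
  have "x [^] n \<otimes> inv x [^] n = \<one>" using xi x by (simp add: nat_pow_distrib[symmetric])
  then show ?thesis using xi x by (metis comm_inv_char nat_pow_closed)
qed

lemma multiplicative_generator:
  obtains g where "g \<in> carrier R" "g \<noteq> \<zero>" "\<And>n::nat. g [^] n = \<one> \<longleftrightarrow> (q * q - 1) dvd n"
    "\<And>x. x \<in> carrier R \<Longrightarrow> x \<noteq> \<zero> \<Longrightarrow> \<exists>i::nat. x = g [^] i"
proof -
  obtain g where g: "g \<in> carrier R - {\<zero>}" and gen: "carrier R - {\<zero>} = {g [^] i | i::nat. i \<in> UNIV}"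
    using finite_field_mult_group_has_gen[OF finite_carrier] by auto
  have fin: "finite (carrier (Multiplicative_Group.mult_of R))" using finite_carrier by simp
  have g': "g \<in> carrier (Multiplicative_Group.mult_of R)" using g by simp
  have "carrier R - {\<zero>} = (\<lambda>i. g [^] i) ` {0 .. units.ord g - 1}"
    using gen units.ord_elems[OF fin g'] by auto
  then have "card (carrier R - {\<zero>}) \<le> card {0 .. units.ord g - 1}"
    by (metis card_image_le finite_atLeastAtMost)
  also have "\<dots> = units.ord g" using units.ord_ge_1[OF fin g'] by simp
  finally have "card (carrier R - {\<zero>}) \<le> units.ord g" .
  moreover have "card (carrier R - {\<zero>}) = q * q - 1"
    using card_carrier_eq finite_carrier by (simp add: card_Diff_singleton)
  moreover have "units.ord g \<le> q * q - 1"
    using units.ord_le_group_order[OF fin g'] order_mult_of_eq by simp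
  ultimately have "units.ord g = q * q - 1" by simp
  then show ?thesis using that g gen units.pow_eq_id[OF g'] by auto
qed

subsection \<open>Trace, norm and the subfield with q elements\<close>

definition Tr :: "'a \<Rightarrow> 'a" where "Tr x = x \<oplus> x [^] q"
definition Nm :: "'a \<Rightarrow> 'a" where "Nm x = x \<otimes> x [^] q"
definition Fq :: "'a set" where "Fq = {x \<in> carrier R. x [^] q = x}"

lemma Tr_closed [simp]: "x \<in> carrier R \<Longrightarrow> Tr x \<in> carrier R"
  by (simp add: Tr_def)

lemma Nm_closed [simp]: "x \<in> carrier R \<Longrightarrow> Nm x \<in> carrier R"
  by (simp add: Nm_def)

lemma Tr_zero [simp]: "Tr \<zero> = \<zero>"
  using q_ge_2 by (simp add: Tr_def nat_pow_zero)

lemma Nm_zero [simp]: "Nm \<zero> = \<zero>"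
  by (simp add: Nm_def)

lemma Fq_subset: "Fq \<subseteq> carrier R"
  by (auto simp: Fq_def)

lemma one_in_Fq: "\<one> \<in> Fq"
  by (simp add: Fq_def)

lemma add_in_Fq: "x \<in> Fq \<Longrightarrow> y \<in> Fq \<Longrightarrow> x \<oplus> y \<in> Fq"
  by (simp add: Fq_def pow_q_add)

lemma mult_in_Fq: "x \<in> Fq \<Longrightarrow> y \<in> Fq \<Longrightarrow> x \<otimes> y \<in> Fq"
  by (simp add: Fq_def nat_pow_distrib)

lemma inv_in_Fq: "x \<in> Fq \<Longrightarrow> x \<noteq> \<zero> \<Longrightarrow> inv x \<in> Fq"
  by (auto simp: Fq_def inv_pow nonzero_inverse)

lemma Tr_in_Fq: "x \<in> carrier R \<Longrightarrow> Tr x \<in> Fq"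
  by (simp add: Fq_def Tr_def pow_q_add a_comm)

lemma Nm_in_Fq: "x \<in> carrier R \<Longrightarrow> Nm x \<in> Fq"
  by (simp add: Fq_def Nm_def nat_pow_distrib m_comm)

lemma Tr_eq_zero_iff: "x \<in> carrier R \<Longrightarrow> Tr x = \<zero> \<longleftrightarrow> x \<in> Fq"
  by (auto simp: Tr_def Fq_def add_eq_zero_iff)

lemma Tr_one: "Tr \<one> = \<zero>"
  by (simp add: Tr_def)

lemma Tr_add: "x \<in> carrier R \<Longrightarrow> y \<in> carrier R \<Longrightarrow> Tr (x \<oplus> y) = Tr x \<oplus> Tr y"
  by (simp add: Tr_def pow_q_add a_ac)

lemma Tr_mult_Fq: "k \<in> Fq \<Longrightarrow> x \<in> carrier R \<Longrightarrow> Tr (k \<otimes> x) = k \<otimes> Tr x"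
  by (simp add: Tr_def Fq_def nat_pow_distrib r_distr)

lemma pow_q_plus_one: "x \<in> carrier R \<Longrightarrow> x [^] (q + 1) = Nm x"
  by (simp add: Nm_def m_comm)

lemma pow_q_eq_mult: "x \<in> carrier R \<Longrightarrow> x [^] q = x [^] (q - 1) \<otimes> x"
  using q_ge_2 by (metis Suc_diff_1 less_le_trans nat_pow_Suc pos2)

lemma q_square_minus_one: "q * q - 1 = (q - 1) * (q + 1)"
  using q_ge_2 by (simp add: algebra_simps)

lemma Nm_pow_q_minus_one: "c \<in> carrier R \<Longrightarrow> c \<noteq> \<zero> \<Longrightarrow> Nm (c [^] (q - 1)) = \<one>"
proof -
  assume c: "c \<in> carrier R" "c \<noteq> \<zero>"
  have "(q - 1) + (q - 1) * q = q * q - 1" using q_ge_2 by (simp add: algebra_simps)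
  then show ?thesis
    using pow_card_minus_one[OF c] c by (simp add: Nm_def nat_pow_pow nat_pow_mult)
qed

lemma Nm_eq_one_imp_pow_q_minus_one:
  assumes x: "x \<in> carrier R" "Nm x = \<one>"
  obtains c where "c \<in> carrier R" "c \<noteq> \<zero>" "x = c [^] (q - 1)"
proof -
  obtain g where g: "g \<in> carrier R" "g \<noteq> \<zero>" "\<And>n::nat. g [^] n = \<one> \<longleftrightarrow> (q * q - 1) dvd n"
    "\<And>x. x \<in> carrier R \<Longrightarrow> x \<noteq> \<zero> \<Longrightarrow> \<exists>i::nat. x = g [^] i"
    by (rule multiplicative_generator) blast
  have "x \<noteq> \<zero>" using x by (auto simp: Nm_def)
  then obtain i :: nat where i: "x = g [^] i" using g(4) x(1) by blast
  have "g [^] (i * (q + 1)) = x [^] (q + 1)" using i g(1) by (simp only: nat_pow_pow)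
  then have "g [^] (i * (q + 1)) = \<one>" using x pow_q_plus_one by simp
  then have "(q - 1) * (q + 1) dvd i * (q + 1)"
    using g(3) q_square_minus_one by simp
  then have "(q - 1) dvd i"
    by (metis dvd_times_right_cancel_iff add_eq_0_iff_both_eq_0 zero_neq_one)
  then obtain j where "i = (q - 1) * j" by (auto simp: dvd_def)
  then have "x = (g [^] j) [^] (q - 1)" using i g(1) by (simp add: nat_pow_pow mult.commute)
  then show ?thesis using that g(1,2) pow_eq_zero_imp by blast
qed

lemma card_Nm_eq_one_ge: "q + 1 \<le> card {v \<in> carrier R. Nm v = \<one>}"
proof -
  obtain g where g: "g \<in> carrier R" "g \<noteq> \<zero>" "\<And>n::nat. g [^] n = \<one> \<longleftrightarrow> (q * q - 1) dvd n"
    by (rule multiplicative_generator) blast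
  define w where "w = g [^] (q - 1)"
  have w: "w \<in> carrier R" "w \<noteq> \<zero>" unfolding w_def using g pow_eq_zero_imp by auto
  have w_pow_one: "w [^] n = \<one> \<longleftrightarrow> (q + 1) dvd n" for n :: nat
  proof -
    have "w [^] n = \<one> \<longleftrightarrow> (q - 1) * (q + 1) dvd (q - 1) * n"
      using g(1) g(3)[of "(q - 1) * n"] q_square_minus_one by (simp only: w_def nat_pow_pow)
    then show ?thesis using q_ge_2 by (metis nat_mult_dvd_cancel1 zero_less_diff Suc_1 Suc_le_lessD)
  qed
  have "inj_on (\<lambda>j. w [^] j) {..<q + 1}"
  proof (rule inj_onI)
    have "i = j" if "w [^] i = w [^] j" "i \<le> j" "j < q + 1" for i j :: nat
    proof -
      have "w [^] i \<otimes> w [^] (j - i) = w [^] j" using that(2) w by (simp add: nat_pow_mult)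
      then have "w [^] i \<otimes> w [^] (j - i) = w [^] i \<otimes> \<one>" using that(1) w by simp
      then have "w [^] (j - i) = \<one>"
        using w pow_eq_zero_imp[of w i] by (metis m_lcancel nat_pow_closed one_closed)
      then show "i = j" using w_pow_one that by (auto dest: dvd_imp_le)
    qed
    then show "i = j" if "i \<in> {..<q + 1}" "j \<in> {..<q + 1}" "w [^] i = w [^] j" for i j
      using that by (metis lessThan_iff nat_le_linear)
  qed
  moreover have "(\<lambda>j. w [^] j) ` {..<q + 1} \<subseteq> {v \<in> carrier R. Nm v = \<one>}"
  proof safe
    fix j :: nat
    show "w [^] j \<in> carrier R" using w by simp
    have "w [^] j = (g [^] j) [^] (q - 1)" using g(1) by (simp add: w_def nat_pow_pow mult.commute)
    then show "Nm (w [^] j) = \<one>"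
      using g(1,2) Nm_pow_q_minus_one pow_eq_zero_imp by (metis nat_pow_closed)
  qed
  ultimately show ?thesis
    using card_inj_on_le[of _ "{..<q + 1}"] finite_subset[OF _ finite_carrier] by force
qed

lemma exists_Tr_eq_one: "\<exists>\<theta>\<in>carrier R. Tr \<theta> = \<one>"
proof -
  obtain g where g: "g \<in> carrier R" "g \<noteq> \<zero>" "\<And>n::nat. g [^] n = \<one> \<longleftrightarrow> (q * q - 1) dvd n"
    by (rule multiplicative_generator) blast
  have "g [^] (q - 1) \<noteq> \<one>"
  proof
    assume "g [^] (q - 1) = \<one>"
    then have "(q * q - 1) dvd (q - 1)" using g(3) by simp
    moreover have "2 * q \<le> q * q" using q_ge_2 by simp
    then have "0 < q - 1" "q - 1 < q * q - 1" using q_ge_2 by linarith+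
    ultimately show False by (meson dvd_imp_le not_le)
  qed
  have "g [^] q \<noteq> g"
  proof
    assume "g [^] q = g"
    then have "g [^] (q - 1) \<otimes> g = \<one> \<otimes> g" using g pow_q_eq_mult by simp
    then show False using \<open>g [^] (q - 1) \<noteq> \<one>\<close> g m_rcancel by (metis nat_pow_closed one_closed)
  qed
  then have "g \<notin> Fq" by (simp add: Fq_def)
  then have u: "Tr g \<in> Fq" "Tr g \<noteq> \<zero>" using g Tr_in_Fq Tr_eq_zero_iff by auto
  then have "inv (Tr g) \<in> Fq" "inv (Tr g) \<otimes> Tr g = \<one>"
    using inv_in_Fq Fq_subset nonzero_inverse by blast+
  then have "Tr (inv (Tr g) \<otimes> g) = \<one>" using g Tr_mult_Fq by simp
  moreover have "inv (Tr g) \<otimes> g \<in> carrier R" using g \<open>inv (Tr g) \<in> Fq\<close> Fq_subset by auto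
  ultimately show ?thesis by blast
qed

text \<open>The map h r = r^2 + r is two-to-one on the elements of trace 0 or 1, which are twice as
  many as the elements of the subfield, and it maps them into the subfield.\<close>
lemma Fq_artin_schreier:
  assumes "c \<in> Fq"
  shows "\<exists>r\<in>carrier R. r \<otimes> r \<oplus> r = c"
proof -
  define h where "h r = r \<otimes> r \<oplus> r" for r
  define S where "S = {r \<in> carrier R. Tr r = \<zero> \<or> Tr r = \<one>}"
  have h_closed: "h r \<in> carrier R" if "r \<in> carrier R" for r using that by (simp add: h_def)
  have h_add: "h (x \<oplus> y) = h x \<oplus> h y" if "x \<in> carrier R" "y \<in> carrier R" for x y
  proof -
    have "h (x \<oplus> y) = (x \<otimes> x \<oplus> x) \<oplus> (y \<otimes> y \<oplus> y) \<oplus> (x \<otimes> y \<oplus> x \<otimes> y)"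
      unfolding h_def using that by algebra
    then show ?thesis using that by (simp add: h_def)
  qed
  have h_eq_zero: "h r = \<zero> \<longleftrightarrow> r = \<zero> \<or> r = \<one>" if "r \<in> carrier R" for r
  proof -
    have "h r = r \<otimes> (r \<oplus> \<one>)" unfolding h_def using that by algebra
    then show ?thesis using that integral_iff add_eq_zero_iff by auto
  qed
  have pow_q: "r [^] q = Tr r \<oplus> r" if "r \<in> carrier R" for r
    using that by (metis Tr_def a_assoc a_comm add_self l_zero nat_pow_closed)
  obtain \<theta> where \<theta>: "\<theta> \<in> carrier R" "Tr \<theta> = \<one>" using exists_Tr_eq_one by blast
  have fin: "finite S" using finite_carrier by (simp add: S_def)
  have "h ` S \<subseteq> Fq"
  proof
    fix y assume "y \<in> h ` S"
    then obtain r where r: "r \<in> S" "y = h r" by blast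
    have "h r [^] q = h (r [^] q)" using r by (simp add: S_def h_def pow_q_add nat_pow_distrib)
    also have "\<dots> = h r"
      using r h_eq_zero[of \<zero>] h_eq_zero[of \<one>] pow_q h_add h_closed by (auto simp: S_def)
    finally show "y \<in> Fq" using r h_closed by (simp add: Fq_def S_def)
  qed
  moreover have "card S = 2 * card (h ` S)"
  proof (rule card_eq_double_card_image[OF fin])
    fix r assume r: "r \<in> S"
    then have rc: "r \<in> carrier R" by (simp add: S_def)
    have "h y = h r \<longleftrightarrow> y = r \<or> y = \<one> \<oplus> r" if y: "y \<in> carrier R" for y
    proof -
      have "h y = h r \<longleftrightarrow> h (y \<oplus> r) = \<zero>" using y rc h_add h_closed add_eq_zero_iff by simp
      also have "\<dots> \<longleftrightarrow> y \<oplus> r = \<zero> \<or> y \<oplus> r = \<one>" using y rc h_eq_zero by simp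
      also have "\<dots> \<longleftrightarrow> y = r \<or> y = \<one> \<oplus> r" using y rc add_eq_zero_iff add_eq_iff_eq_add by simp
      finally show ?thesis .
    qed
    moreover have "\<one> \<oplus> r \<in> S" using r rc by (auto simp: S_def Tr_add Tr_one)
    ultimately have "{y \<in> S. h y = h r} = {r, \<one> \<oplus> r}" using r by (auto simp: S_def)
    then show "card {y \<in> S. h y = h r} = 2" using r by (simp add: S_def)
  qed
  moreover have "card S = 2 * card Fq"
  proof -
    have Tr_shift: "Tr (\<theta> \<oplus> x) = \<one> \<oplus> Tr x" if "x \<in> carrier R" for x
      using that \<theta> by (simp add: Tr_add)
    have "S = Fq \<union> (\<lambda>x. \<theta> \<oplus> x) ` Fq"
    proof (intro equalityI subsetI)
      fix r assume "r \<in> S"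
      then have rc: "r \<in> carrier R" and "Tr r = \<zero> \<or> Tr r = \<one>" by (simp_all add: S_def)
      then have "r \<in> Fq \<or> \<theta> \<oplus> r \<in> Fq"
        using Tr_eq_zero_iff[of r] Tr_eq_zero_iff[of "\<theta> \<oplus> r"] Tr_shift[of r] \<theta> one_add_one by auto
      moreover have "r = \<theta> \<oplus> (\<theta> \<oplus> r)" using \<theta> rc by (simp add: a_assoc[symmetric])
      ultimately show "r \<in> Fq \<union> (\<lambda>x. \<theta> \<oplus> x) ` Fq" by blast
    next
      fix r assume "r \<in> Fq \<union> (\<lambda>x. \<theta> \<oplus> x) ` Fq"
      then show "r \<in> S" using \<theta> Fq_subset Tr_eq_zero_iff Tr_shift by (auto simp: S_def)
    qed
    moreover have "\<theta> \<oplus> x \<notin> Fq" if "x \<in> Fq" for x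
    proof -
      have "x \<in> carrier R" using that Fq_subset by blast
      then show ?thesis
        using that \<theta> Tr_shift[of x] Tr_eq_zero_iff[of x] Tr_eq_zero_iff[of "\<theta> \<oplus> x"] by simp
    qed
    then have "Fq \<inter> (\<lambda>x. \<theta> \<oplus> x) ` Fq = {}" by blast
    moreover have "card ((\<lambda>x. \<theta> \<oplus> x) ` Fq) = card Fq"
    proof (rule card_image, rule inj_onI)
      fix x y assume "x \<in> Fq" "y \<in> Fq" "\<theta> \<oplus> x = \<theta> \<oplus> y"
      then show "x = y" using \<theta> Fq_subset by (metis a_assoc add_self l_zero subsetD)
    qed
    ultimately show ?thesis
      using card_Un_disjoint[of Fq "(\<lambda>x. \<theta> \<oplus> x) ` Fq"] finite_subset[OF Fq_subset finite_carrier]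
      by simp
  qed
  ultimately have "h ` S = Fq"
    using card_subset_eq[OF finite_subset[OF Fq_subset finite_carrier]] by simp
  then show ?thesis using assms by (force simp: S_def h_def)
qed

subsection \<open>Planarity of P1 and the kernels of its derivatives\<close>

definition P1 :: "'a \<Rightarrow> 'a \<Rightarrow> 'a \<Rightarrow> 'a" where
  "P1 a b x = a \<otimes> x [^] (q + 1) \<oplus> b \<otimes> x [^] (2 * (q + 1))"

lemma P1_eq_Nm: "y \<in> carrier R \<Longrightarrow> P1 a b y = a \<otimes> Nm y \<oplus> b \<otimes> Nm y [^] (2::nat)"
proof -
  assume y: "y \<in> carrier R"
  have "y [^] (2 * (q + 1)) = (y [^] (q + 1)) [^] (2::nat)"
    using nat_pow_pow[OF y, of "q + 1" 2] by (simp only: mult.commute)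
  then show ?thesis unfolding P1_def by (simp only: pow_q_plus_one[OF y])
qed

lemma Nm_add:
  assumes x: "x \<in> carrier R" and c: "c \<in> carrier R"
  shows "Nm (x \<oplus> c) = Nm x \<oplus> Tr (c [^] q \<otimes> x) \<oplus> Nm c"
proof -
  have "Tr (c [^] q \<otimes> x) = c [^] q \<otimes> x \<oplus> c \<otimes> x [^] q"
    using x c by (simp add: Tr_def nat_pow_distrib)
  moreover have "x [^] q \<in> carrier R" "c [^] q \<in> carrier R" using x c by auto
  moreover have "Nm (x \<oplus> c) = (x \<oplus> c) \<otimes> (x [^] q \<oplus> c [^] q)"
    using x c by (simp add: Nm_def pow_q_add)
  ultimately show ?thesis using x c unfolding Nm_def by algebra
qed

definition P1_linear_part :: "'a \<Rightarrow> 'a \<Rightarrow> 'a \<Rightarrow> 'a \<Rightarrow> 'a" where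
  "P1_linear_part a b c x =
     a \<otimes> Tr (c [^] q \<otimes> x) \<oplus> b \<otimes> Tr (c [^] q \<otimes> x) [^] (2::nat) \<oplus> c \<otimes> x"

lemma P1_linear_part_closed:
  "a \<in> carrier R \<Longrightarrow> b \<in> carrier R \<Longrightarrow> c \<in> carrier R \<Longrightarrow> x \<in> carrier R
    \<Longrightarrow> P1_linear_part a b c x \<in> carrier R"
  by (simp add: P1_linear_part_def)

lemma P1_difference:
  assumes a: "a \<in> carrier R" and b: "b \<in> carrier R" and c: "c \<in> carrier R" and x: "x \<in> carrier R"
  shows "P1 a b (x \<oplus> c) \<oplus> P1 a b x \<oplus> c \<otimes> x = P1 a b c \<oplus> P1_linear_part a b c x"
proof -
  define t where "t = Tr (c [^] q \<otimes> x)"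
  have t: "t \<in> carrier R" using c x by (simp add: t_def)
  have "P1 a b (x \<oplus> c) \<oplus> P1 a b x \<oplus> c \<otimes> x
      = a \<otimes> (Nm x \<oplus> t \<oplus> Nm c) \<oplus> b \<otimes> (Nm x [^] (2::nat) \<oplus> t [^] (2::nat) \<oplus> Nm c [^] (2::nat))
        \<oplus> (a \<otimes> Nm x \<oplus> b \<otimes> Nm x [^] (2::nat)) \<oplus> c \<otimes> x"
    using x c t by (simp add: P1_eq_Nm Nm_add t_def square_add)
  also have "\<dots> = (a \<otimes> Nm c \<oplus> b \<otimes> Nm c [^] (2::nat)) \<oplus> (a \<otimes> t \<oplus> b \<otimes> t [^] (2::nat) \<oplus> c \<otimes> x)
      \<oplus> ((a \<otimes> Nm x \<oplus> a \<otimes> Nm x) \<oplus> (b \<otimes> Nm x [^] (2::nat) \<oplus> b \<otimes> Nm x [^] (2::nat)))"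
  proof -
    have "Nm x \<in> carrier R" "Nm c \<in> carrier R" "Nm x [^] (2::nat) \<in> carrier R"
      "Nm c [^] (2::nat) \<in> carrier R" "t [^] (2::nat) \<in> carrier R" using x c t by auto
    then show ?thesis using a b c x t by algebra
  qed
  also have "\<dots> = P1 a b c \<oplus> P1_linear_part a b c x"
    using a b c x t by (simp add: P1_eq_Nm P1_linear_part_def t_def)
  finally show ?thesis .
qed

lemma P1_linear_part_add:
  assumes "a \<in> carrier R" "b \<in> carrier R" "c \<in> carrier R" "x \<in> carrier R" "y \<in> carrier R"
  shows "P1_linear_part a b c (x \<oplus> y) = P1_linear_part a b c x \<oplus> P1_linear_part a b c y"
proof -
  have "Tr (c [^] q \<otimes> (x \<oplus> y)) = Tr (c [^] q \<otimes> x) \<oplus> Tr (c [^] q \<otimes> y)"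
    using assms by (simp add: r_distr Tr_add)
  then show ?thesis using assms by (simp add: P1_linear_part_def square_add r_distr a_ac)
qed

lemma planar_P1_iff_kernel:
  assumes a: "a \<in> carrier R" and b: "b \<in> carrier R"
  shows "planar R (P1 a b) \<longleftrightarrow>
    (\<forall>c\<in>carrier R - {\<zero>}. \<forall>x\<in>carrier R. P1_linear_part a b c x = \<zero> \<longrightarrow> x = \<zero>)"
  unfolding planar_def
proof (intro ball_cong refl)
  fix c assume "c \<in> carrier R - {\<zero>}"
  then have c: "c \<in> carrier R" by blast
  have "bij_betw (\<lambda>x. P1 a b (x \<oplus> c) \<oplus> P1 a b x \<oplus> c \<otimes> x) (carrier R) (carrier R)
    \<longleftrightarrow> bij_betw (\<lambda>x. P1 a b c \<oplus> P1_linear_part a b c x) (carrier R) (carrier R)"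
    by (rule bij_betw_cong) (simp add: P1_difference a b c)
  also have "\<dots> \<longleftrightarrow> (\<forall>x\<in>carrier R. P1_linear_part a b c x = \<zero> \<longrightarrow> x = \<zero>)"
    using a b c by (intro bij_betw_add_additive_iff finite_carrier)
      (simp_all add: P1_eq_Nm P1_linear_part_closed P1_linear_part_add)
  finally show "bij_betw (\<lambda>x. P1 a b (x \<oplus> c) \<oplus> P1 a b x \<oplus> c \<otimes> x) (carrier R) (carrier R)
    \<longleftrightarrow> (\<forall>x\<in>carrier R. P1_linear_part a b c x = \<zero> \<longrightarrow> x = \<zero>)" .
qed

text \<open>On the kernel, t = Tr (c^q x) lies in the subfield and the equation reads
  c x = t (a + b t); conversely every such t = k yields the kernel element x = k (a + b k) / c.\<close>
lemma Tr_eq_one_if_P1_linear_part_eq_zero: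
  assumes a: "a \<in> carrier R" and b: "b \<in> carrier R" and c: "c \<in> carrier R" "c \<noteq> \<zero>"
    and x: "x \<in> carrier R" "x \<noteq> \<zero>" and L: "P1_linear_part a b c x = \<zero>"
  shows "Tr (c [^] q \<otimes> x) \<in> Fq - {\<zero>}"
    and "Tr (c [^] (q - 1) \<otimes> (a \<oplus> b \<otimes> Tr (c [^] q \<otimes> x))) = \<one>"
proof -
  define t where "t = Tr (c [^] q \<otimes> x)"
  have t: "t \<in> Fq" "t \<in> carrier R" using c x Tr_in_Fq by (simp_all add: t_def)
  have "a \<otimes> t \<oplus> b \<otimes> t [^] (2::nat) = c \<otimes> x"
    using L a b c x t by (simp add: P1_linear_part_def t_def add_eq_zero_iff)
  then have cx: "c \<otimes> x = t \<otimes> (a \<oplus> b \<otimes> t)"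
    using a b t by (simp add: numeral_2_eq_2) algebra
  have "t \<noteq> \<zero>" using cx x c a b integral_iff by auto
  then show "Tr (c [^] q \<otimes> x) \<in> Fq - {\<zero>}" using t by (simp add: t_def)
  have v: "c [^] (q - 1) \<in> carrier R" using c by simp
  have "c [^] q \<otimes> x = c [^] (q - 1) \<otimes> (c \<otimes> x)" using c x by (simp add: pow_q_eq_mult m_assoc)
  also have "\<dots> = t \<otimes> (c [^] (q - 1) \<otimes> (a \<oplus> b \<otimes> t))" unfolding cx using a b t v by algebra
  finally have "t = Tr (t \<otimes> (c [^] (q - 1) \<otimes> (a \<oplus> b \<otimes> t)))" by (simp add: t_def)
  then have "t \<otimes> \<one> = t \<otimes> Tr (c [^] (q - 1) \<otimes> (a \<oplus> b \<otimes> t))"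
    using a b t v by (simp add: Tr_mult_Fq)
  moreover have "Tr (c [^] (q - 1) \<otimes> (a \<oplus> b \<otimes> t)) \<in> carrier R" using a b t v by simp
  ultimately show "Tr (c [^] (q - 1) \<otimes> (a \<oplus> b \<otimes> Tr (c [^] q \<otimes> x))) = \<one>"
    using m_lcancel[OF \<open>t \<noteq> \<zero>\<close> t(2)] unfolding t_def by (metis one_closed)
qed

lemma P1_linear_part_eq_zero_if_Tr_eq_one:
  assumes a: "a \<in> carrier R" and b: "b \<in> carrier R" and c: "c \<in> carrier R" "c \<noteq> \<zero>"
    and k: "k \<in> Fq" and T: "Tr (c [^] (q - 1) \<otimes> (a \<oplus> b \<otimes> k)) = \<one>"
  defines "x \<equiv> inv c \<otimes> (k \<otimes> (a \<oplus> b \<otimes> k))"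
  shows "Tr (c [^] q \<otimes> x) = k" and "P1_linear_part a b c x = \<zero>"
proof -
  have kc: "k \<in> carrier R" using k Fq_subset by blast
  have ci: "inv c \<in> carrier R" "c \<otimes> inv c = \<one>" using c by (simp_all add: nonzero_inverse)
  have xc: "x \<in> carrier R" using ci a b kc by (simp add: x_def)
  have cx: "c \<otimes> x = k \<otimes> (a \<oplus> b \<otimes> k)"
    using ci a b c kc by (simp add: x_def m_assoc[symmetric])
  have v: "c [^] (q - 1) \<in> carrier R" using c by simp
  have "c [^] q \<otimes> x = c [^] (q - 1) \<otimes> (c \<otimes> x)" using c xc by (simp add: pow_q_eq_mult m_assoc)
  also have "\<dots> = k \<otimes> (c [^] (q - 1) \<otimes> (a \<oplus> b \<otimes> k))" unfolding cx using a b kc v by algebra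
  finally show t: "Tr (c [^] q \<otimes> x) = k" using a b c kc k T by (simp add: Tr_mult_Fq)
  have "k [^] (2::nat) = k \<otimes> k" using kc by (simp add: numeral_2_eq_2)
  then have "P1_linear_part a b c x = (a \<otimes> k \<oplus> a \<otimes> k) \<oplus> (b \<otimes> (k \<otimes> k) \<oplus> b \<otimes> (k \<otimes> k))"
    using a b kc unfolding P1_linear_part_def t cx by algebra
  then show "P1_linear_part a b c x = \<zero>" using a b kc by simp
qed

lemma P1_linear_part_kernel_iff:
  assumes a: "a \<in> carrier R" and b: "b \<in> carrier R" and c: "c \<in> carrier R" "c \<noteq> \<zero>"
  shows "(\<exists>x\<in>carrier R. x \<noteq> \<zero> \<and> P1_linear_part a b c x = \<zero>)
    \<longleftrightarrow> (\<exists>k\<in>Fq - {\<zero>}. Tr (c [^] (q - 1) \<otimes> (a \<oplus> b \<otimes> k)) = \<one>)"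
proof
  assume "\<exists>x\<in>carrier R. x \<noteq> \<zero> \<and> P1_linear_part a b c x = \<zero>"
  then show "\<exists>k\<in>Fq - {\<zero>}. Tr (c [^] (q - 1) \<otimes> (a \<oplus> b \<otimes> k)) = \<one>"
    using Tr_eq_one_if_P1_linear_part_eq_zero[OF a b c] by blast
next
  assume "\<exists>k\<in>Fq - {\<zero>}. Tr (c [^] (q - 1) \<otimes> (a \<oplus> b \<otimes> k)) = \<one>"
  then obtain k where k: "k \<in> Fq" "k \<noteq> \<zero>" and T: "Tr (c [^] (q - 1) \<otimes> (a \<oplus> b \<otimes> k)) = \<one>"
    by blast
  let ?x = "inv c \<otimes> (k \<otimes> (a \<oplus> b \<otimes> k))"
  have "?x \<in> carrier R" using k Fq_subset a b c by (auto simp: nonzero_inverse)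
  moreover have "?x \<noteq> \<zero>"
    using P1_linear_part_eq_zero_if_Tr_eq_one(1)[OF a b c k(1) T] k c by auto
  ultimately show "\<exists>x\<in>carrier R. x \<noteq> \<zero> \<and> P1_linear_part a b c x = \<zero>"
    using P1_linear_part_eq_zero_if_Tr_eq_one(2)[OF a b c k(1) T] by blast
qed

lemma planar_P1_iff:
  assumes a: "a \<in> carrier R" and b: "b \<in> carrier R"
  shows "planar R (P1 a b) \<longleftrightarrow>
    (\<forall>v\<in>carrier R. Nm v = \<one> \<longrightarrow> (\<forall>k\<in>Fq - {\<zero>}. Tr (v \<otimes> (a \<oplus> b \<otimes> k)) \<noteq> \<one>))"
proof -
  have "planar R (P1 a b) \<longleftrightarrow>
      (\<forall>c\<in>carrier R - {\<zero>}. \<not> (\<exists>k\<in>Fq - {\<zero>}. Tr (c [^] (q - 1) \<otimes> (a \<oplus> b \<otimes> k)) = \<one>))"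
    using planar_P1_iff_kernel[OF a b] P1_linear_part_kernel_iff[OF a b] by blast
  also have "\<dots> \<longleftrightarrow> (\<forall>v\<in>carrier R. Nm v = \<one> \<longrightarrow> (\<forall>k\<in>Fq - {\<zero>}. Tr (v \<otimes> (a \<oplus> b \<otimes> k)) \<noteq> \<one>))"
    using Nm_pow_q_minus_one Nm_eq_one_imp_pow_q_minus_one
    by (metis (no_types, lifting) DiffD1 DiffD2 DiffI nat_pow_closed singletonD singletonI)
  finally show ?thesis .
qed

subsection \<open>The quadratic a X^2 + X + a^q\<close>

lemma Tr_eq_one_iff_root:
  assumes a: "a \<in> carrier R" and v: "v \<in> carrier R" "Nm v = \<one>"
  shows "Tr (v \<otimes> a) = \<one> \<longleftrightarrow> a \<otimes> v \<otimes> v \<oplus> v = a [^] q"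
proof -
  have c: "v [^] q \<in> carrier R" "a [^] q \<in> carrier R" "a \<otimes> v \<otimes> v \<in> carrier R" using a v by auto
  have "v \<otimes> Tr (v \<otimes> a) = a \<otimes> v \<otimes> v \<oplus> (v \<otimes> v [^] q) \<otimes> a [^] q"
    using a v c unfolding Tr_def by (simp add: nat_pow_distrib r_distr m_ac)
  then have key: "v \<otimes> Tr (v \<otimes> a) = a \<otimes> v \<otimes> v \<oplus> a [^] q" using v c by (simp add: Nm_def)
  have "v \<noteq> \<zero>" using v by auto
  have "Tr (v \<otimes> a) = \<one> \<longleftrightarrow> v \<otimes> Tr (v \<otimes> a) = v \<otimes> \<one>"
    using m_lcancel[OF \<open>v \<noteq> \<zero>\<close>] a v by (metis Tr_closed m_closed one_closed)
  also have "\<dots> \<longleftrightarrow> a \<otimes> v \<otimes> v \<oplus> a [^] q = v" using key v by simp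
  also have "\<dots> \<longleftrightarrow> a \<otimes> v \<otimes> v \<oplus> v = a [^] q"
    using c v add_eq_iff_eq_add by (metis a_comm)
  finally show ?thesis .
qed

lemma root_conj_inv:
  assumes a: "a \<in> carrier R" and x: "x \<in> carrier R" "x \<noteq> \<zero>" and root: "a \<otimes> x \<otimes> x \<oplus> x = a [^] q"
  shows "a \<otimes> inv (x [^] q) \<otimes> inv (x [^] q) \<oplus> inv (x [^] q) = a [^] q"
proof -
  define w where "w = inv (x [^] q)"
  have xq: "x [^] q \<in> carrier R" "x [^] q \<noteq> \<zero>" "a [^] q \<in> carrier R"
    using a x pow_eq_zero_imp by auto
  then have w: "w \<in> carrier R" "x [^] q \<otimes> w = \<one>" by (simp_all add: w_def nonzero_inverse)
  have "(a \<otimes> x \<otimes> x \<oplus> x) [^] q = a" using root a by simp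
  then have "a [^] q \<otimes> x [^] q \<otimes> x [^] q \<oplus> x [^] q = a"
    using a x by (simp add: pow_q_add nat_pow_distrib)
  then have "a \<otimes> w \<otimes> w = (a [^] q \<otimes> x [^] q \<otimes> x [^] q \<oplus> x [^] q) \<otimes> w \<otimes> w" by simp
  also have "\<dots> = a [^] q \<otimes> (x [^] q \<otimes> w) \<otimes> (x [^] q \<otimes> w) \<oplus> (x [^] q \<otimes> w) \<otimes> w"
    using xq(1,3) w(1) by algebra
  also have "\<dots> = a [^] q \<oplus> w" using xq w by (simp only: w(2) r_one l_one)
  finally show ?thesis using a w xq add_eq_iff_eq_add unfolding w_def[symmetric] by (metis m_closed)
qed

lemma root_exists:
  assumes a: "a \<in> carrier R" "a \<noteq> \<zero>"
  obtains s where "s \<in> carrier R" "s \<noteq> \<zero>" "a \<otimes> s \<otimes> s \<oplus> s = a [^] q"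
proof -
  obtain r where r: "r \<in> carrier R" "r \<otimes> r \<oplus> r = Nm a"
    using Fq_artin_schreier Nm_in_Fq a by blast
  have ai: "inv a \<in> carrier R" "a \<otimes> inv a = \<one>" using a by (simp_all add: nonzero_inverse)
  define s where "s = r \<otimes> inv a"
  have sc: "s \<in> carrier R" using r ai by (simp add: s_def)
  have "a \<otimes> s \<otimes> s \<oplus> s = (r \<otimes> r \<otimes> (a \<otimes> inv a) \<oplus> r) \<otimes> inv a"
    unfolding s_def using a(1) r(1) ai(1) by algebra
  also have "\<dots> = (r \<otimes> r \<oplus> r) \<otimes> inv a" using ai r by simp
  also have "\<dots> = a [^] q \<otimes> (a \<otimes> inv a)"
    unfolding r(2) Nm_def using a(1) ai(1) nat_pow_closed[of a q] by algebra
  finally have root: "a \<otimes> s \<otimes> s \<oplus> s = a [^] q" using ai a by simp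
  moreover have "s \<noteq> \<zero>" using root a pow_eq_zero_imp[of a q] by auto
  ultimately show ?thesis using that sc by blast
qed

lemma root_add_conj_inv:
  assumes a: "a \<in> carrier R" and s: "s \<in> carrier R" "s \<noteq> \<zero>"
    and root: "a \<otimes> s \<otimes> s \<oplus> s = a [^] q" and "Nm s \<noteq> \<one>"
  shows "a \<otimes> (inv (s [^] q) \<oplus> s) = \<one>"
proof (rule quadratic_roots_sum[OF a _ s(1) root_conj_inv[OF a s root] root])
  have "s [^] q \<in> carrier R" "s [^] q \<noteq> \<zero>" using s pow_eq_zero_imp by auto
  then have w: "inv (s [^] q) \<in> carrier R" "inv (s [^] q) \<otimes> s [^] q = \<one>"
    by (simp_all add: nonzero_inverse)
  then show "inv (s [^] q) \<in> carrier R" by simp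
  show "inv (s [^] q) \<noteq> s"
  proof
    assume "inv (s [^] q) = s"
    then have "Nm s = \<one>" using w by (simp add: Nm_def)
    then show False using \<open>Nm s \<noteq> \<one>\<close> by contradiction
  qed
qed

lemma eq_frac_if_root:
  assumes a: "a \<in> carrier R" and s: "s \<in> carrier R" "s \<noteq> \<zero>"
    and root: "a \<otimes> s \<otimes> s \<oplus> s = a [^] q" and "Nm s \<noteq> \<one>"
  shows "\<one> \<oplus> Nm s \<noteq> \<zero>" and "a = s [^] q \<otimes> inv (\<one> \<oplus> Nm s)"
proof -
  define w where "w = inv (s [^] q)"
  have sq: "s [^] q \<in> carrier R" "s [^] q \<noteq> \<zero>" using s pow_eq_zero_imp by auto
  then have w: "w \<in> carrier R" "w \<otimes> s [^] q = \<one>" by (simp_all add: w_def nonzero_inverse)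
  show D: "\<one> \<oplus> Nm s \<noteq> \<zero>" using \<open>Nm s \<noteq> \<one>\<close> s add_eq_zero_iff by auto
  have "\<one> \<oplus> Nm s = (w \<oplus> s) \<otimes> s [^] q" using w s sq by (simp add: Nm_def l_distr)
  then have aD: "a \<otimes> (\<one> \<oplus> Nm s) = s [^] q"
    using root_add_conj_inv[OF assms] a w s sq by (simp add: w_def m_assoc[symmetric])
  have Dc: "\<one> \<oplus> Nm s \<in> carrier R" "inv (\<one> \<oplus> Nm s) \<in> carrier R"
    "(\<one> \<oplus> Nm s) \<otimes> inv (\<one> \<oplus> Nm s) = \<one>" using s D by (simp_all add: nonzero_inverse)
  have "a = a \<otimes> ((\<one> \<oplus> Nm s) \<otimes> inv (\<one> \<oplus> Nm s))" using a Dc by simp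
  also have "\<dots> = (a \<otimes> (\<one> \<oplus> Nm s)) \<otimes> inv (\<one> \<oplus> Nm s)" using a Dc by (simp add: m_assoc)
  also have "\<dots> = s [^] q \<otimes> inv (\<one> \<oplus> Nm s)" using aD by simp
  finally show "a = s [^] q \<otimes> inv (\<one> \<oplus> Nm s)" .
qed

lemma root_if_eq_frac:
  assumes s: "s \<in> carrier R" and D: "\<one> \<oplus> Nm s \<noteq> \<zero>"
    and a_eq: "a = s [^] q \<otimes> inv (\<one> \<oplus> Nm s)"
  shows "a \<otimes> s \<otimes> s \<oplus> s = a [^] q"
proof -
  define d where "d = inv (\<one> \<oplus> Nm s)"
  have "\<one> \<oplus> Nm s \<in> Fq" using s one_in_Fq Nm_in_Fq add_in_Fq by blast
  then have d: "d \<in> Fq" "d \<in> carrier R" "(\<one> \<oplus> Nm s) \<otimes> d = \<one>"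
    using inv_in_Fq[OF _ D] Fq_subset s D by (auto simp: d_def nonzero_inverse)
  have sq: "s [^] q \<in> carrier R" using s by simp
  have a_eq': "a = s [^] q \<otimes> d" using a_eq by (simp add: d_def)
  have aq: "a [^] q = s \<otimes> d" using d s by (simp add: a_eq' nat_pow_distrib Fq_def)
  have "a \<otimes> s \<otimes> s \<oplus> s = s [^] q \<otimes> d \<otimes> s \<otimes> s \<oplus> s \<otimes> ((\<one> \<oplus> Nm s) \<otimes> d)"
    using d(3) s by (simp add: a_eq')
  also have "\<dots> = s \<otimes> d \<oplus> (s \<otimes> d \<otimes> Nm s \<oplus> s \<otimes> d \<otimes> Nm s)"
    unfolding Nm_def using s sq d(2) by algebra
  also have "\<dots> = s \<otimes> d" using s d by simp
  finally show ?thesis using aq by simp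
qed

lemma Tr_ne_one_if_eq_frac:
  assumes s: "s \<in> carrier R" and D: "\<one> \<oplus> Nm s \<noteq> \<zero>"
    and a_eq: "a = s [^] q \<otimes> inv (\<one> \<oplus> Nm s)" and v: "v \<in> carrier R" "Nm v = \<one>"
  shows "Tr (v \<otimes> a) \<noteq> \<one>"
proof
  assume "Tr (v \<otimes> a) = \<one>"
  have a: "a \<in> carrier R" using a_eq s D by (simp add: nonzero_inverse)
  have root_v: "a \<otimes> v \<otimes> v \<oplus> v = a [^] q"
    using Tr_eq_one_iff_root[OF a v] \<open>Tr (v \<otimes> a) = \<one>\<close> by blast
  have root_s: "a \<otimes> s \<otimes> s \<oplus> s = a [^] q" using root_if_eq_frac[OF s D a_eq] .
  have "a \<noteq> \<zero>" using \<open>Tr (v \<otimes> a) = \<one>\<close> v by auto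
  then have "s \<noteq> \<zero>" using a_eq q_ge_2 by (auto simp: nat_pow_zero)
  have "Nm s \<noteq> \<one>" using D by auto
  then have "v \<noteq> s" using v by auto
  have "a \<otimes> (v \<oplus> s) = a \<otimes> (inv (s [^] q) \<oplus> s)"
    using quadratic_roots_sum[OF a v(1) s root_v root_s \<open>v \<noteq> s\<close>]
      root_add_conj_inv[OF a s \<open>s \<noteq> \<zero>\<close> root_s \<open>Nm s \<noteq> \<one>\<close>] by simp
  moreover have sq: "s [^] q \<in> carrier R" "s [^] q \<noteq> \<zero>" using s \<open>s \<noteq> \<zero>\<close> pow_eq_zero_imp by auto
  then have w: "inv (s [^] q) \<in> carrier R" by (simp add: nonzero_inverse)
  ultimately have "v \<oplus> s = inv (s [^] q) \<oplus> s" using m_lcancel[OF \<open>a \<noteq> \<zero>\<close> a] v s by simp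
  then have "v = inv (s [^] q) \<oplus> s \<oplus> s" using add_eq_iff_eq_add v s w by simp
  then have "v = inv (s [^] q)" using s w by (simp add: a_assoc)
  then have "v \<otimes> s [^] q = \<one>" using sq by (simp add: nonzero_inverse)
  then have "v \<otimes> v [^] q = v \<otimes> s [^] q" using v by (simp add: Nm_def)
  moreover have "v \<noteq> \<zero>" using v by auto
  ultimately have "v [^] q = s [^] q" using m_lcancel v sq by simp
  then have "v = s" using v s by (metis pow_q_pow_q)
  then show False using \<open>v \<noteq> s\<close> by contradiction
qed

lemma no_norm_one_trace_one_iff:
  assumes a: "a \<in> carrier R"
  shows "(\<forall>v\<in>carrier R. Nm v = \<one> \<longrightarrow> Tr (v \<otimes> a) \<noteq> \<one>)
    \<longleftrightarrow> (\<exists>s\<in>carrier R. \<one> \<oplus> Nm s \<noteq> \<zero> \<and> a = s [^] q \<otimes> inv (\<one> \<oplus> Nm s))"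
proof
  assume no_v: "\<forall>v\<in>carrier R. Nm v = \<one> \<longrightarrow> Tr (v \<otimes> a) \<noteq> \<one>"
  show "\<exists>s\<in>carrier R. \<one> \<oplus> Nm s \<noteq> \<zero> \<and> a = s [^] q \<otimes> inv (\<one> \<oplus> Nm s)"
  proof (cases "a = \<zero>")
    case True
    then show ?thesis using q_ge_2 by (intro bexI[of _ \<zero>]) (auto simp: nat_pow_zero)
  next
    case False
    obtain s where s: "s \<in> carrier R" "s \<noteq> \<zero>" and root: "a \<otimes> s \<otimes> s \<oplus> s = a [^] q"
      using root_exists[OF a False] by blast
    have "Nm s \<noteq> \<one>" using no_v Tr_eq_one_iff_root[OF a s(1)] root s by auto
    then show ?thesis using eq_frac_if_root[OF a s root] s by blast
  qed
next
  assume "\<exists>s\<in>carrier R. \<one> \<oplus> Nm s \<noteq> \<zero> \<and> a = s [^] q \<otimes> inv (\<one> \<oplus> Nm s)"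
  then show "\<forall>v\<in>carrier R. Nm v = \<one> \<longrightarrow> Tr (v \<otimes> a) \<noteq> \<one>"
    using Tr_ne_one_if_eq_frac by blast
qed

lemma card_Nm_one_Tr_zero_le:
  assumes b: "b \<in> carrier R" "b \<noteq> \<zero>"
  shows "card {v \<in> carrier R. Nm v = \<one> \<and> Tr (v \<otimes> b) = \<zero>} \<le> 1"
proof -
  have sq: "v \<otimes> v \<otimes> b = b [^] q" if v: "v \<in> carrier R" "Nm v = \<one>" "Tr (v \<otimes> b) = \<zero>" for v
  proof -
    have "v \<otimes> b = v [^] q \<otimes> b [^] q"
      using v b add_eq_zero_iff by (simp add: Tr_def nat_pow_distrib)
    then have "v \<otimes> v \<otimes> b = (v \<otimes> v [^] q) \<otimes> b [^] q" using v b by (simp add: m_assoc)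
    then show ?thesis using v b by (simp add: Nm_def)
  qed
  have "v = w" if "v \<in> carrier R" "Nm v = \<one>" "Tr (v \<otimes> b) = \<zero>"
    "w \<in> carrier R" "Nm w = \<one>" "Tr (w \<otimes> b) = \<zero>" for v w
  proof -
    have "v \<otimes> v \<otimes> b = w \<otimes> w \<otimes> b" using sq that by simp
    then have "v \<otimes> v = w \<otimes> w" using m_rcancel[OF b(2) b(1)] that by simp
    then have "(v \<oplus> w) [^] (2::nat) = v \<otimes> v \<oplus> v \<otimes> v"
      using that by (simp add: square_add) (simp add: numeral_2_eq_2)
    then have "(v \<oplus> w) [^] (2::nat) = \<zero>" using that by simp
    then show "v = w" using that pow_eq_zero_imp add_eq_zero_iff by blast
  qed
  moreover have "finite {v \<in> carrier R. Nm v = \<one> \<and> Tr (v \<otimes> b) = \<zero>}"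
    using finite_carrier by simp
  ultimately show ?thesis unfolding One_nat_def by (subst card_le_Suc0_iff_eq) auto
qed

lemma card_Nm_one_Tr_one_le:
  assumes a: "a \<in> carrier R"
  shows "card {v \<in> carrier R. Nm v = \<one> \<and> Tr (v \<otimes> a) = \<one>} \<le> 2"
    (is "card ?B \<le> 2")
proof (cases "?B = {}")
  case False
  then obtain v0 where v0: "v0 \<in> ?B" by blast
  then have "a \<noteq> \<zero>" by auto
  have "w = inv a \<oplus> v0 \<or> w = v0" if "w \<in> ?B" for w
  proof (rule disjCI)
    assume "w \<noteq> v0"
    then have "a \<otimes> (w \<oplus> v0) = \<one>"
      using that v0 Tr_eq_one_iff_root[OF a] quadratic_roots_sum[OF a] by auto
    moreover have "w \<oplus> v0 \<in> carrier R" using that v0 by simp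
    ultimately have "w \<oplus> v0 = inv a" using comm_inv_char[OF a] by simp
    then show "w = inv a \<oplus> v0"
      using that v0 a \<open>a \<noteq> \<zero>\<close> nonzero_inverse add_eq_iff_eq_add by auto
  qed
  then have "?B \<subseteq> {v0, inv a \<oplus> v0}" by blast
  then have "card ?B \<le> card {v0, inv a \<oplus> v0}" by (intro card_mono) auto
  also have "\<dots> \<le> 2" by (simp add: card_insert_le_m1)
  finally show ?thesis .
next
  case True
  then show ?thesis by (metis card.empty zero_le)
qed

theorem not_planar_P1_if_b_nonzero:
  assumes "2 < q" and a: "a \<in> carrier R" and b: "b \<in> carrier R" "b \<noteq> \<zero>"
  shows "\<not> planar R (P1 a b)"
proof -
  let ?C = "{v \<in> carrier R. Nm v = \<one>}"
  let ?A = "{v \<in> carrier R. Nm v = \<one> \<and> Tr (v \<otimes> b) = \<zero>}"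
  let ?B = "{v \<in> carrier R. Nm v = \<one> \<and> Tr (v \<otimes> a) = \<one>}"
  have "card (?A \<union> ?B) \<le> 3"
    using card_Un_le[of ?A ?B] card_Nm_one_Tr_zero_le[OF b] card_Nm_one_Tr_one_le[OF a] by linarith
  moreover have "4 \<le> card ?C" using card_Nm_eq_one_ge \<open>2 < q\<close> by linarith
  ultimately have "\<not> ?C \<subseteq> ?A \<union> ?B"
    using card_mono[of "?A \<union> ?B" ?C] finite_carrier by fastforce
  then obtain v where v: "v \<in> carrier R" "Nm v = \<one>"
    and t1: "Tr (v \<otimes> a) \<noteq> \<one>" and u0: "Tr (v \<otimes> b) \<noteq> \<zero>" by blast
  define t where "t = Tr (v \<otimes> a)"
  define u where "u = Tr (v \<otimes> b)"
  have t: "t \<in> Fq" "t \<in> carrier R" using v a Tr_in_Fq by (simp_all add: t_def)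
  have u: "u \<in> Fq" "u \<in> carrier R" "u \<noteq> \<zero>" using v b u0 Tr_in_Fq by (simp_all add: u_def)
  have ui: "inv u \<in> Fq" "inv u \<in> carrier R" "inv u \<otimes> u = \<one>"
    using u inv_in_Fq Fq_subset nonzero_inverse by auto
  define k where "k = (\<one> \<oplus> t) \<otimes> inv u"
  have "\<one> \<oplus> t \<noteq> \<zero>" using t1 t add_eq_zero_iff by (auto simp: t_def)
  then have k: "k \<in> Fq" "k \<in> carrier R" "k \<noteq> \<zero>"
    using t ui one_in_Fq add_in_Fq mult_in_Fq integral_iff u by (auto simp: k_def)
  have "v \<otimes> (a \<oplus> b \<otimes> k) = v \<otimes> a \<oplus> k \<otimes> (v \<otimes> b)" using v a b k by algebra
  then have "Tr (v \<otimes> (a \<oplus> b \<otimes> k)) = t \<oplus> k \<otimes> u"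
    using v a b k by (simp add: t_def u_def Tr_add Tr_mult_Fq)
  also have "\<dots> = t \<oplus> (\<one> \<oplus> t)" using t u ui by (simp add: k_def m_assoc)
  also have "\<dots> = \<one>" using t(2) by (metis a_lcomm add_self one_closed r_zero)
  finally have "Tr (v \<otimes> (a \<oplus> b \<otimes> k)) = \<one>" .
  then show ?thesis using planar_P1_iff[OF a b(1)] v k by blast
qed

theorem planar_P1_zero_iff:
  assumes a: "a \<in> carrier R"
  shows "planar R (P1 a \<zero>) \<longleftrightarrow> (\<exists>s\<in>carrier R. \<one> \<oplus> Nm s \<noteq> \<zero> \<and> a = s [^] q \<otimes> inv (\<one> \<oplus> Nm s))"
proof -
  have "a \<oplus> \<zero> \<otimes> k = a" if "k \<in> Fq" for k using a that Fq_subset by auto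
  then have "(\<forall>k\<in>Fq - {\<zero>}. Tr (v \<otimes> (a \<oplus> \<zero> \<otimes> k)) \<noteq> \<one>) \<longleftrightarrow> Tr (v \<otimes> a) \<noteq> \<one>" for v
    using one_in_Fq by (metis (no_types, lifting) DiffD1 DiffI one_not_zero singletonD)
  then have "planar R (P1 a \<zero>) \<longleftrightarrow> (\<forall>v\<in>carrier R. Nm v = \<one> \<longrightarrow> Tr (v \<otimes> a) \<noteq> \<one>)"
    using planar_P1_iff[OF a zero_closed] by simp
  then show ?thesis using no_norm_one_trace_one_iff[OF a] by simp
qed

theorem planar_P1_classification:
  assumes "2 \<le> m" and a: "a \<in> carrier R" and b: "b \<in> carrier R"
  shows "planar R (\<lambda>x. a \<otimes> x [^] (q + 1) \<oplus> b \<otimes> x [^] (2 * (q + 1))) \<longleftrightarrow>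
    (\<exists>s\<in>carrier R. \<one> \<oplus> s [^] (1 + q) \<noteq> \<zero> \<and> a = s [^] q \<otimes> inv (\<one> \<oplus> s [^] (1 + q)) \<and> b = \<zero>)"
proof -
  have "2 < q" using \<open>2 \<le> m\<close> power_increasing[of 2 m "2::nat"] by simp
  have "s [^] (1 + q) = Nm s" if "s \<in> carrier R" for s
    using pow_q_plus_one that by (simp add: add.commute)
  then show ?thesis
    using planar_P1_zero_iff[OF a] not_planar_P1_if_b_nonzero[OF \<open>2 < q\<close> a b]
    by (cases "b = \<zero>") (auto simp: P1_def[abs_def])
qed
end

theorem theorem1:
  shows "\<exists>m0::nat. \<forall>m::nat \<ge> m0. \<forall>R :: nat ring.
     field R \<and> finite (carrier R) \<and> card (carrier R) = (2::nat) ^ (2 * m) \<longrightarrow>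
     (\<forall>a \<in> carrier R. \<forall>b \<in> carrier R.
        planar R (\<lambda>x. a \<otimes>\<^bsub>R\<^esub> x [^]\<^bsub>R\<^esub> ((2::nat) ^ m + 1)
                      \<oplus>\<^bsub>R\<^esub> b \<otimes>\<^bsub>R\<^esub> x [^]\<^bsub>R\<^esub> (2 * ((2::nat) ^ m + 1)))
        \<longleftrightarrow>
        (\<exists>s \<in> carrier R.
           \<one>\<^bsub>R\<^esub> \<oplus>\<^bsub>R\<^esub> s [^]\<^bsub>R\<^esub> (1 + (2::nat) ^ m) \<noteq> \<zero>\<^bsub>R\<^esub> \<and>
           a = s [^]\<^bsub>R\<^esub> ((2::nat) ^ m) \<otimes>\<^bsub>R\<^esub>
                 inv\<^bsub>R\<^esub> (\<one>\<^bsub>R\<^esub> \<oplus>\<^bsub>R\<^esub> s [^]\<^bsub>R\<^esub> (1 + (2::nat) ^ m)) \<and>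
           b = \<zero>\<^bsub>R\<^esub>))"
  by (intro exI[of _ 2] allI impI ballI gf_q2.planar_P1_classification)
    (auto simp: gf_q2_def gf_q2_axioms_def)

end
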